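(* Let $f\colon\mathbb{N}\to\mathbb{C}$ be multiplicative and let $x\ge1$ be such that $F_1(x)>0$. Then $$\mathbb{E}[U_x^2]=\sum_{\substack{n_1,n_2\le x\\ \gcd(n_1,n_2)=1}}\frac{1}{\max\{n_1,n_2\}^2}\Bigg|\sum_{g_1\mid n_1^\infty,\ g_2\mid n_2^\infty}\frac{\overline{f(g_1)}f(g_1n_1)f(g_2)\overline{f(g_2n_2)}}{g_1g_2}\,S_1\big(x,n_1n_2,\max\{n_1,n_2\}g_1g_2\big)\Bigg|^2.$$
   Context: Multiplicative: $f(1)=1$ and $f(nm)=f(n)f(m)$ for coprime $n,m$. $g\mid n^\infty$ means $g$ ranges over positive integers all of whose prime factors divide $n$. $\alpha$ is a Steinhaus random multiplicative function ($(\alpha(p))_p$ i.i.d. uniform on the unit circle, $\alpha(n)=\prod_p\alpha(p)^{a_p}$). For $m\in\mathbb{N}$ and $y>0$, $F_m(y):=\sum_{h\le y,\,\gcd(h,m)=1}|f(h)|^2(\tfrac1h-\tfrac1y)$ (an empty sum is $0$), and $S_1(x,m,d):=F_m(x/d)/F_1(x)$. $s_t:=t^{-1/2}\sum_{n\le t}\alpha(n)f(n)$ and $U_x:=F_1(x)^{-1}\int_1^x\frac{|s_t|^2}{t}dt$. *)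

theory Defs
  imports "HOL-Probability.Probability" "HOL-Computational_Algebra.Primes"
begin

definition multiplicative :: "(nat \<Rightarrow> complex) \<Rightarrow> bool" where
  "multiplicative f \<longleftrightarrow> f 1 = 1 \<and> (\<forall>n m. coprime n m \<longrightarrow> f (n * m) = f n * f m)"

definition divides_pow_inf :: "nat \<Rightarrow> nat \<Rightarrow> bool" where
  "divides_pow_inf g n \<longleftrightarrow> g > 0 \<and> (\<forall>p. prime p \<longrightarrow> p dvd g \<longrightarrow> p dvd n)"

definition circle_unif :: "complex measure" where
  "circle_unif = distr (uniform_measure lborel {0..<2*pi}) borel (\<lambda>t. cis t)"

text \<open>Probability space of a Steinhaus random multiplicative function: coordinate p
  of the sample point is alpha(p) (only prime coordinates are used).\<close>
definition steinhaus :: "(nat \<Rightarrow> complex) measure" where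
  "steinhaus = PiM UNIV (\<lambda>_::nat. circle_unif)"

definition alpha :: "(nat \<Rightarrow> complex) \<Rightarrow> nat \<Rightarrow> complex" where
  "alpha \<omega> n = (\<Prod>p\<in>prime_factors n. \<omega> p ^ multiplicity p n)"

definition Fm :: "(nat \<Rightarrow> complex) \<Rightarrow> nat \<Rightarrow> real \<Rightarrow> real" where
  "Fm f m y = (\<Sum>h\<in>{h::nat. 1 \<le> h \<and> real h \<le> y \<and> coprime h m}.
                 (cmod (f h))^2 * (1 / real h - 1 / y))"

definition S1 :: "(nat \<Rightarrow> complex) \<Rightarrow> real \<Rightarrow> nat \<Rightarrow> nat \<Rightarrow> real" where
  "S1 f x m d = Fm f m (x / real d) / Fm f 1 x"

definition s_t :: "(nat \<Rightarrow> complex) \<Rightarrow> (nat \<Rightarrow> complex) \<Rightarrow> real \<Rightarrow> complex" where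
  "s_t f \<omega> t = of_real (t powr (-1/2)) * (\<Sum>n\<in>{1..nat \<lfloor>t\<rfloor>}. alpha \<omega> n * f n)"

definition U_x :: "(nat \<Rightarrow> complex) \<Rightarrow> real \<Rightarrow> (nat \<Rightarrow> complex) \<Rightarrow> real" where
  "U_x f x \<omega> = set_lebesgue_integral lborel {1..x} (\<lambda>t. (cmod (s_t f \<omega> t))^2 / t) / Fm f 1 x"

end

theory Submission
  imports Defs
begin

text \<open>
  Integrating the expansion of \<open>|s_t|\<^sup>2\<close> over \<open>t\<close> gives
  \<open>F\<^sub>1(x) U\<^sub>x = \<Sum>\<^bsub>n,m \<le> x\<^esub> \<alpha>(n) conj \<alpha>(m) u(n,m)\<close> with
  \<open>u(n,m) = f(n) conj f(m) (1/max(n,m) - 1/x)\<close>.  The Steinhaus moments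
  \<open>E[\<alpha>(n) conj \<alpha>(m) conj \<alpha>(n') \<alpha>(m')] = [n m' = m n']\<close> turn \<open>F\<^sub>1(x)\<^sup>2 E[U\<^sub>x\<^sup>2]\<close>
  into \<open>\<Sum> |c(n\<^sub>1,n\<^sub>2)|\<^sup>2\<close> over coprime pairs \<open>(n\<^sub>1,n\<^sub>2)\<close>, where
  \<open>c(n\<^sub>1,n\<^sub>2) = \<Sum>\<^sub>d u(d n\<^sub>1, d n\<^sub>2)\<close> collects the pairs with ratio \<open>n\<^sub>1/n\<^sub>2\<close>.
  Every \<open>d\<close> factors uniquely as \<open>g\<^sub>1 g\<^sub>2 h\<close> with \<open>g\<^sub>1 | n\<^sub>1\<^sup>\<infinity>\<close>, \<open>g\<^sub>2 | n\<^sub>2\<^sup>\<infinity>\<close> and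
  \<open>(h, n\<^sub>1 n\<^sub>2) = 1\<close>; by multiplicativity \<open>f(h)\<close> then splits off from \<open>u(d n\<^sub>1, d n\<^sub>2)\<close>,
  and the sum over \<open>h\<close> is \<open>F\<^bsub>n\<^sub>1 n\<^sub>2\<^esub>(x / (max(n\<^sub>1,n\<^sub>2) g\<^sub>1 g\<^sub>2)) / (max(n\<^sub>1,n\<^sub>2) g\<^sub>1 g\<^sub>2)\<close>.
\<close>

section \<open>Steinhaus moments\<close>

lemma measurable_cis [measurable]: "cis \<in> borel_measurable borel"
  by (intro borel_measurable_continuous_onI continuous_intros)

lemma prob_space_circle_unif: "prob_space circle_unif"
  unfolding circle_unif_def
  by (intro prob_space.prob_space_distr prob_space_uniform_measure) auto

lemma uniform_measure_Ico_2pi: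
  "uniform_measure lborel {0..<2*pi} = density lborel (\<lambda>t. ennreal (indicator {0..<2*pi} t / (2*pi)))"
proof -
  have "1 / ennreal (2*pi) = ennreal (1 / (2*pi))"
    using divide_ennreal[of 1 "2*pi"] by simp
  then show ?thesis
    unfolding uniform_measure_def
    by (intro density_cong) (auto simp: emeasure_lborel_Ico split: split_indicator)
qed

lemma integral_circle_unif:
  fixes h :: "complex \<Rightarrow> complex"
  assumes [measurable]: "h \<in> borel_measurable borel"
  shows "integral\<^sup>L circle_unif h = (\<integral>t. indicator {0..2*pi} t *\<^sub>R h (cis t) \<partial>lborel) / (2*pi)"
proof -
  have "integral\<^sup>L circle_unif h = (\<integral>t. h (cis t) \<partial>uniform_measure lborel {0..<2*pi})"
    unfolding circle_unif_def by (rule integral_distr) auto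
  also have "\<dots> = (\<integral>t. (indicator {0..<2*pi} t / (2*pi)) *\<^sub>R h (cis t) \<partial>lborel)"
    unfolding uniform_measure_Ico_2pi by (rule integral_density) auto
  also have "\<dots> = (\<integral>t. (1 / (2*pi)) *\<^sub>R (indicator {0..2*pi} t *\<^sub>R h (cis t)) \<partial>lborel)"
    using AE_lborel_singleton[of "2*pi"]
    by (intro integral_cong_AE) (auto elim!: eventually_mono split: split_indicator)
  also have "\<dots> = (\<integral>t. indicator {0..2*pi} t *\<^sub>R h (cis t) \<partial>lborel) / (2*pi)"
    by (simp only: integral_scaleR_right) (simp add: scaleR_conv_of_real field_simps)
  finally show ?thesis .
qed

lemma integral_cis_int_multiple:
  fixes k :: int
  shows "(\<integral>t. indicator {0..2*pi} t *\<^sub>R cis (of_int k * t) \<partial>lborel) = (if k = 0 then 2 * pi else 0)"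
proof (cases "k = 0")
  case True
  have "(\<integral>t. indicator {0..2*pi} t *\<^sub>R (1::complex) \<partial>lborel) = of_real (2*pi) - of_real 0"
    by (intro integral_FTC_atLeastAtMost) (auto intro!: derivative_eq_intros)
  with True show ?thesis by simp
next
  case False
  define F where "F t = cis (of_int k * t) / (\<i> * of_int k)" for t
  have "(F has_vector_derivative cis (of_int k * t)) (at t within S)" for t S
  proof -
    have "((\<lambda>t. cis (of_int k * t)) has_vector_derivative \<i> * of_int k * cis (of_int k * t)) (at t within S)"
      unfolding has_vector_derivative_def
      by (rule has_derivative_eq_rhs, rule has_derivative_cis)
        (auto intro!: derivative_eq_intros simp: fun_eq_iff scaleR_conv_of_real algebra_simps)
    from has_vector_derivative_divide[OF this, of "\<i> * of_int k"] False show ?thesis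
      unfolding F_def by simp
  qed
  then have "(\<integral>t. indicator {0..2*pi} t *\<^sub>R cis (of_int k * t) \<partial>lborel) = F (2*pi) - F 0"
    by (intro integral_FTC_atLeastAtMost) (auto intro!: continuous_intros)
  moreover have "cis (of_int k * (2*pi)) = 1"
    using cis_multiple_2pi[of "of_int k"] by (simp add: mult.commute)
  ultimately show ?thesis
    using False by (simp add: F_def)
qed

lemma borel_measurable_monomial_cnj: "(\<lambda>z::complex. z ^ a * cnj z ^ b) \<in> borel_measurable borel"
  by (intro borel_measurable_continuous_onI continuous_intros)

lemma circle_unif_moment:
  "integrable circle_unif (\<lambda>z. z ^ a * cnj z ^ b)"
  "integral\<^sup>L circle_unif (\<lambda>z. z ^ a * cnj z ^ b) = (if a = b then 1 else 0)"
proof -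
  interpret prob_space circle_unif by (rule prob_space_circle_unif)
  show "integrable circle_unif (\<lambda>z. z ^ a * cnj z ^ b)"
  proof (rule integrable_const_bound[where B=1])
    show "AE z in circle_unif. norm (z ^ a * cnj z ^ b) \<le> 1"
      unfolding circle_unif_def by (subst AE_distr_iff) (auto simp: norm_mult norm_power)
  qed (simp add: circle_unif_def borel_measurable_monomial_cnj)
  define k where "k = int a - int b"
  have "cis t ^ a * cnj (cis t) ^ b = cis (of_int k * t)" for t
  proof -
    have "cis t ^ a * cnj (cis t) ^ b = cis (real a * t) * cis (real b * - t)"
      unfolding cis_cnj Complex.DeMoivre ..
    also have "\<dots> = cis (of_int k * t)"
      unfolding cis_mult k_def by (simp add: algebra_simps)
    finally show ?thesis .
  qed
  moreover have "k = 0 \<longleftrightarrow> a = b"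
    unfolding k_def by simp
  ultimately show "integral\<^sup>L circle_unif (\<lambda>z. z ^ a * cnj z ^ b) = (if a = b then 1 else 0)"
    by (simp add: integral_circle_unif[OF borel_measurable_monomial_cnj] integral_cis_int_multiple)
qed

lemma steinhaus_prod_moment:
  fixes Q :: "nat set" and a b :: "nat \<Rightarrow> nat"
  assumes "finite Q"
  shows "integrable steinhaus (\<lambda>\<omega>. \<Prod>p\<in>Q. \<omega> p ^ a p * cnj (\<omega> p) ^ b p)"
    and "integral\<^sup>L steinhaus (\<lambda>\<omega>. \<Prod>p\<in>Q. \<omega> p ^ a p * cnj (\<omega> p) ^ b p) =
          (if \<forall>p\<in>Q. a p = b p then 1 else 0)"
proof -
  interpret circle: prob_space circle_unif by (rule prob_space_circle_unif)
  interpret product_prob_space "\<lambda>_::nat. circle_unif" UNIV by unfold_locales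
  define G where "G y = (\<Prod>p\<in>Q. y p ^ a p * cnj (y p) ^ b p)" for y :: "nat \<Rightarrow> complex"
  have G: "integrable (PiM Q (\<lambda>_. circle_unif)) G"
    "integral\<^sup>L (PiM Q (\<lambda>_. circle_unif)) G = (\<Prod>p\<in>Q. if a p = b p then 1 else 0)"
    unfolding G_def
    by (rule product_integrable_prod[OF assms circle_unif_moment(1)])
      (simp add: product_integral_prod[OF assms circle_unif_moment(1)] circle_unif_moment(2))
  have restrict: "(\<lambda>\<omega>. restrict \<omega> Q) \<in> measurable steinhaus (PiM Q (\<lambda>_. circle_unif))"
    unfolding steinhaus_def by (rule measurable_restrict_subset) simp
  have distr: "distr steinhaus (PiM Q (\<lambda>_. circle_unif)) (\<lambda>\<omega>. restrict \<omega> Q) = PiM Q (\<lambda>_. circle_unif)"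
    unfolding steinhaus_def using assms by (rule distr_PiM_restrict_finite) simp
  have G_restrict: "G (restrict \<omega> Q) = (\<Prod>p\<in>Q. \<omega> p ^ a p * cnj (\<omega> p) ^ b p)" for \<omega>
    unfolding G_def by (rule prod.cong) auto
  have G_meas: "G \<in> borel_measurable (PiM Q (\<lambda>_. circle_unif))"
    using G(1) by (rule borel_measurable_integrable)
  show "integrable steinhaus (\<lambda>\<omega>. \<Prod>p\<in>Q. \<omega> p ^ a p * cnj (\<omega> p) ^ b p)"
    using integrable_distr_eq[OF restrict G_meas] G(1) distr by (simp add: G_restrict)
  have "(\<Prod>p\<in>Q. if a p = b p then 1 else 0 :: complex) = (if \<forall>p\<in>Q. a p = b p then 1 else 0)"
    using assms by (auto simp: prod_zero_iff)
  then show "integral\<^sup>L steinhaus (\<lambda>\<omega>. \<Prod>p\<in>Q. \<omega> p ^ a p * cnj (\<omega> p) ^ b p) =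
          (if \<forall>p\<in>Q. a p = b p then 1 else 0)"
    using integral_distr[OF restrict G_meas] G(2) distr by (simp add: G_restrict)
qed

lemma alpha_eq_prod_superset:
  assumes "n > 0" "finite Q" "prime_factors n \<subseteq> Q" "\<forall>p\<in>Q. prime p"
  shows "alpha \<omega> n = (\<Prod>p\<in>Q. \<omega> p ^ multiplicity p n)"
  unfolding alpha_def
proof (rule prod.mono_neutral_left[OF assms(2,3)])
  show "\<forall>p\<in>Q - prime_factors n. \<omega> p ^ multiplicity p n = 1"
    using assms by (auto simp: in_prime_factors_iff not_dvd_imp_multiplicity_0)
qed

lemma mult_eq_iff_multiplicity_sum_eq:
  fixes n m n' m' :: nat
  assumes "n > 0" "m > 0" "n' > 0" "m' > 0"
  shows "n * m' = m * n' \<longleftrightarrow>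
    (\<forall>p\<in>prime_factors (n * m * n' * m'). multiplicity p n + multiplicity p m' = multiplicity p m + multiplicity p n')"
proof
  assume "n * m' = m * n'"
  then show "\<forall>p\<in>prime_factors (n * m * n' * m'). multiplicity p n + multiplicity p m' = multiplicity p m + multiplicity p n'"
    using assms by (metis in_prime_factors_imp_prime prime_elem_multiplicity_mult_distrib
        prime_imp_prime_elem not_gr0)
next
  assume H: "\<forall>p\<in>prime_factors (n * m * n' * m'). multiplicity p n + multiplicity p m' = multiplicity p m + multiplicity p n'"
  show "n * m' = m * n'"
  proof (rule multiplicity_eq_nat)
    fix p :: nat assume p: "prime p"
    show "multiplicity p (n * m') = multiplicity p (m * n')"
    proof (cases "p dvd n * m * n' * m'")
      case True
      then show ?thesis using H assms p by (simp add: in_prime_factors_iff prime_elem_multiplicity_mult_distrib)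
    next
      case False
      then have "\<not> p dvd n * m'" "\<not> p dvd m * n'"
        by (metis dvd_mult dvd_mult2 mult.assoc mult.commute)+
      then show ?thesis by (simp add: not_dvd_imp_multiplicity_0)
    qed
  qed (use assms in auto)
qed

lemma steinhaus_alpha_moment:
  fixes n m n' m' :: nat
  assumes "n > 0" "m > 0" "n' > 0" "m' > 0"
  shows "integrable steinhaus (\<lambda>\<omega>. alpha \<omega> n * cnj (alpha \<omega> m) * cnj (alpha \<omega> n') * alpha \<omega> m')"
    and "integral\<^sup>L steinhaus (\<lambda>\<omega>. alpha \<omega> n * cnj (alpha \<omega> m) * cnj (alpha \<omega> n') * alpha \<omega> m') =
          (if n * m' = m * n' then 1 else 0)"
proof -
  define Q where "Q = prime_factors (n * m * n' * m')"
  have pos: "n * m * n' * m' > 0"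
    using assms by simp
  have alpha_Q: "alpha \<omega> k = (\<Prod>p\<in>Q. \<omega> p ^ multiplicity p k)" if "k dvd n * m * n' * m'" for k \<omega>
    using that unfolding Q_def
    by (intro alpha_eq_prod_superset dvd_prime_factors) (auto intro: dvd_pos_nat[OF pos])
  have "alpha \<omega> n * cnj (alpha \<omega> m) * cnj (alpha \<omega> n') * alpha \<omega> m' =
    (\<Prod>p\<in>Q. \<omega> p ^ (multiplicity p n + multiplicity p m') * cnj (\<omega> p) ^ (multiplicity p m + multiplicity p n'))"
    for \<omega>
    by (simp add: alpha_Q power_add prod.distrib mult_ac)
  then show "integrable steinhaus (\<lambda>\<omega>. alpha \<omega> n * cnj (alpha \<omega> m) * cnj (alpha \<omega> n') * alpha \<omega> m')"
    "integral\<^sup>L steinhaus (\<lambda>\<omega>. alpha \<omega> n * cnj (alpha \<omega> m) * cnj (alpha \<omega> n') * alpha \<omega> m') =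
          (if n * m' = m * n' then 1 else 0)"
    by (simp_all add: steinhaus_prod_moment Q_def mult_eq_iff_multiplicity_sum_eq[OF assms])
qed

section \<open>The mean square of \<open>U\<^sub>x\<close>\<close>

definition Ucoeff :: "(nat \<Rightarrow> complex) \<Rightarrow> real \<Rightarrow> nat \<Rightarrow> nat \<Rightarrow> complex" where
  "Ucoeff f x n m = f n * cnj (f m) * of_real (1 / real (max n m) - 1 / x)"

lemma le_nat_floor_iff: "0 \<le> t \<Longrightarrow> n \<le> nat \<lfloor>t\<rfloor> \<longleftrightarrow> real n \<le> t"
  by (simp add: le_nat_iff le_floor_iff)

lemma powr_minus_half_sq: "(t::real) > 0 \<Longrightarrow> (t powr (-1/2))^2 = 1 / t"
  by (simp add: power2_eq_square powr_add[symmetric] powr_minus_divide)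

lemma integral_double_sum:
  assumes "\<And>i j. i \<in> I \<Longrightarrow> j \<in> J \<Longrightarrow> integrable M (f i j)"
  shows "(\<integral>x. (\<Sum>i\<in>I. \<Sum>j\<in>J. f i j x) \<partial>M) = (\<Sum>i\<in>I. \<Sum>j\<in>J. \<integral>x. f i j x \<partial>M)"
proof (subst Bochner_Integration.integral_sum)
  show "(\<Sum>i\<in>I. \<integral>x. (\<Sum>j\<in>J. f i j x) \<partial>M) = (\<Sum>i\<in>I. \<Sum>j\<in>J. \<integral>x. f i j x \<partial>M)"
    by (intro sum.cong refl Bochner_Integration.integral_sum assms)
qed (intro Bochner_Integration.integrable_sum assms)

lemma integral_indicator_inverse_square:
  fixes a b :: real
  assumes "0 < a" "a \<le> b"
  shows "integrable lborel (\<lambda>t. indicator {a..b} t *\<^sub>R (1 / t^2))"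
    and "(\<integral>t. indicator {a..b} t *\<^sub>R (1 / t^2) \<partial>lborel) = 1 / a - 1 / b"
proof -
  have cont: "continuous_on {a..b} (\<lambda>t::real. 1 / t^2)"
    using assms by (intro continuous_intros) auto
  show "integrable lborel (\<lambda>t. indicator {a..b} t *\<^sub>R (1 / t^2))"
    using borel_integrable_atLeastAtMost'[OF cont] unfolding set_integrable_def .
  have "(\<integral>t. indicator {a..b} t *\<^sub>R (1 / t^2) \<partial>lborel) = (\<lambda>t. - 1 / t) b - (\<lambda>t. - 1 / t) a"
  proof (rule integral_FTC_atLeastAtMost[OF assms(2) _ cont])
    fix t assume "a \<le> t" "t \<le> b"
    then have "t \<noteq> 0" using assms by auto
    then show "((\<lambda>t. - 1 / t) has_vector_derivative 1 / t^2) (at t within {a..b})"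
      by (auto intro!: derivative_eq_intros
          simp: has_real_derivative_iff_has_vector_derivative[symmetric] power2_eq_square)
  qed
  then show "(\<integral>t. indicator {a..b} t *\<^sub>R (1 / t^2) \<partial>lborel) = 1 / a - 1 / b"
    by simp
qed

lemma norm_s_t_sq_div:
  fixes x t :: real
  assumes "1 \<le> t" "t \<le> x"
  shows "(cmod (s_t f \<omega> t))^2 / t =
    (\<Sum>n\<in>{1..nat \<lfloor>x\<rfloor>}. \<Sum>m\<in>{1..nat \<lfloor>x\<rfloor>}. Re (alpha \<omega> n * f n * cnj (alpha \<omega> m * f m)) *
        (indicator {real (max n m)..x} t *\<^sub>R (1 / t^2)))"
proof -
  define b where "b n = alpha \<omega> n * f n" for n
  define R where "R n m = Re (b n * cnj (b m))" for n m
  define P where "P = {1..nat \<lfloor>x\<rfloor>}"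
  define S where "S = (\<Sum>n\<in>{1..nat \<lfloor>t\<rfloor>}. b n)"
  have t_pos: "t > 0"
    using assms by simp
  have "(cmod (s_t f \<omega> t))^2 / t = (t powr (-1/2))^2 * (cmod S)^2 / t"
    unfolding s_t_def S_def b_def using assms by (simp add: norm_mult power_mult_distrib)
  also have "\<dots> = (cmod S)^2 / t^2"
    unfolding powr_minus_half_sq[OF t_pos] by (simp add: power2_eq_square)
  also have "(cmod S)^2 = Re (S * cnj S)"
    by (simp flip: complex_norm_square)
  also have "S * cnj S = (\<Sum>n\<in>{1..nat \<lfloor>t\<rfloor>}. \<Sum>m\<in>{1..nat \<lfloor>t\<rfloor>}. b n * cnj (b m))"
    unfolding S_def cnj_sum by (rule sum_product)
  also have "Re \<dots> = (\<Sum>n\<in>{1..nat \<lfloor>t\<rfloor>}. \<Sum>m\<in>{1..nat \<lfloor>t\<rfloor>}. R n m)"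
    unfolding R_def by simp
  also have "\<dots> = (\<Sum>n\<in>P. if real n \<le> t then \<Sum>m\<in>P. if real m \<le> t then R n m else 0 else 0)"
  proof -
    have "{1..nat \<lfloor>t\<rfloor>} = {n\<in>P. real n \<le> t}"
      unfolding P_def using assms by (auto simp: le_nat_floor_iff)
    then show ?thesis
      unfolding P_def by (simp only: sum.inter_filter[OF finite_atLeastAtMost])
  qed
  also have "\<dots> / t^2 = (\<Sum>n\<in>P. \<Sum>m\<in>P. R n m * (indicator {real (max n m)..x} t *\<^sub>R (1 / t^2)))"
    unfolding sum_divide_distrib using assms
    by (intro sum.cong refl) (auto simp: indicator_def of_nat_max sum_divide_distrib intro!: sum.cong sum.neutral)
  finally show ?thesis
    unfolding P_def R_def b_def .
qed

lemma integral_norm_s_t_sq_div: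
  fixes x :: real
  assumes "1 \<le> x"
  shows "(LINT t:{1..x}|lborel. (cmod (s_t f \<omega> t))^2 / t) =
    (\<Sum>n\<in>{1..nat \<lfloor>x\<rfloor>}. \<Sum>m\<in>{1..nat \<lfloor>x\<rfloor>}. Re (alpha \<omega> n * f n * cnj (alpha \<omega> m * f m)) *
        (1 / real (max n m) - 1 / x))"
proof -
  define P where "P = {1..nat \<lfloor>x\<rfloor>}"
  define R where "R n m = Re (alpha \<omega> n * f n * cnj (alpha \<omega> m * f m))" for n m
  define g where "g n m t = indicator {real (max n m)..x} t *\<^sub>R (1 / t^2)" for n m and t :: real
  have bounds: "0 < real (max n m)" "real (max n m) \<le> x" if "n \<in> P" "m \<in> P" for n m
    using that assms by (auto simp: P_def le_nat_floor_iff of_nat_max)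
  have int_g: "integrable lborel (g n m)" if "n \<in> P" "m \<in> P" for n m
    unfolding g_def by (intro integral_indicator_inverse_square(1) bounds that)
  have "(LINT t:{1..x}|lborel. (cmod (s_t f \<omega> t))^2 / t) =
      (\<integral>t. (\<Sum>n\<in>P. \<Sum>m\<in>P. R n m * g n m t) \<partial>lborel)"
    unfolding set_lebesgue_integral_def
  proof (rule Bochner_Integration.integral_cong[OF refl])
    fix t :: real
    show "indicator {1..x} t *\<^sub>R ((cmod (s_t f \<omega> t))^2 / t) = (\<Sum>n\<in>P. \<Sum>m\<in>P. R n m * g n m t)"
    proof (cases "t \<in> {1..x}")
      case True
      then show ?thesis using norm_s_t_sq_div[of t x f \<omega>] by (simp add: P_def R_def g_def)
    next
      case False
      then have "g n m t = 0" if "n \<in> P" "m \<in> P" for n m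
        using bounds[OF that] by (auto simp: g_def indicator_def)
      then show ?thesis using False by simp
    qed
  qed
  also have "\<dots> = (\<Sum>n\<in>P. \<Sum>m\<in>P. R n m * (\<integral>t. g n m t \<partial>lborel))"
    by (subst integral_double_sum) (simp_all add: int_g)
  also have "\<dots> = (\<Sum>n\<in>P. \<Sum>m\<in>P. R n m * (1 / real (max n m) - 1 / x))"
    unfolding g_def using integral_indicator_inverse_square(2)[OF bounds] by simp
  finally show ?thesis
    unfolding P_def R_def .
qed

lemma hermitian_double_sum_real:
  fixes A :: "'a \<Rightarrow> 'a \<Rightarrow> complex"
  assumes "\<And>i j. A j i = cnj (A i j)"
  shows "(\<Sum>i\<in>S. \<Sum>j\<in>S. A i j) \<in> \<real>"
proof -
  have "cnj (\<Sum>i\<in>S. \<Sum>j\<in>S. A i j) = (\<Sum>i\<in>S. \<Sum>j\<in>S. A j i)"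
    by (simp add: cnj_sum assms[symmetric])
  also have "\<dots> = (\<Sum>i\<in>S. \<Sum>j\<in>S. A i j)"
    by (rule sum.swap)
  finally show ?thesis
    by (simp add: Reals_cnj_iff)
qed

lemma U_x_sq:
  fixes x :: real
  assumes "1 \<le> x"
  shows "(U_x f x \<omega>)^2 =
    (cmod (\<Sum>q\<in>{1..nat \<lfloor>x\<rfloor>} \<times> {1..nat \<lfloor>x\<rfloor>}.
        alpha \<omega> (fst q) * cnj (alpha \<omega> (snd q)) * Ucoeff f x (fst q) (snd q)))^2 / (Fm f 1 x)^2"
proof -
  define P where "P = {1..nat \<lfloor>x\<rfloor>}"
  define A where "A n m = alpha \<omega> n * cnj (alpha \<omega> m) * Ucoeff f x n m" for n m
  define Z where "Z = (\<Sum>n\<in>P. \<Sum>m\<in>P. A n m)"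
  have "Z \<in> \<real>"
    unfolding Z_def by (rule hermitian_double_sum_real) (simp add: A_def Ucoeff_def max.commute)
  have A_eq: "A n m = alpha \<omega> n * f n * cnj (alpha \<omega> m * f m) * of_real (1 / real (max n m) - 1 / x)"
    for n m
    unfolding A_def Ucoeff_def by (simp add: mult_ac)
  have Re_scale: "Re (z * of_real r) = Re z * r" for z r
    by simp
  have "(LINT t:{1..x}|lborel. (cmod (s_t f \<omega> t))^2 / t) = Re Z"
    unfolding integral_norm_s_t_sq_div[OF assms] Z_def A_eq Re_sum Re_scale P_def ..
  then have "(U_x f x \<omega>)^2 = (Re Z)^2 / (Fm f 1 x)^2"
    unfolding U_x_def by (simp add: power_divide)
  also have "(Re Z)^2 = (cmod Z)^2"
    using \<open>Z \<in> \<real>\<close> by (simp add: complex_is_Real_iff cmod_eq_Re)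
  finally show ?thesis
    unfolding Z_def A_def P_def sum.cartesian_product by (simp add: case_prod_beta)
qed

lemma integral_norm_sum_sq:
  fixes X :: "'a \<Rightarrow> 'i \<Rightarrow> complex" and c :: "'i \<Rightarrow> complex"
  assumes "finite S" and int: "\<And>i j. i \<in> S \<Longrightarrow> j \<in> S \<Longrightarrow> integrable M (\<lambda>\<omega>. X \<omega> i * cnj (X \<omega> j))"
  shows "of_real (\<integral>\<omega>. (cmod (\<Sum>i\<in>S. X \<omega> i * c i))^2 \<partial>M) =
    (\<Sum>i\<in>S. \<Sum>j\<in>S. c i * cnj (c j) * (\<integral>\<omega>. X \<omega> i * cnj (X \<omega> j) \<partial>M))"
proof -
  have "of_real ((cmod (\<Sum>i\<in>S. X \<omega> i * c i))^2) =
      (\<Sum>i\<in>S. \<Sum>j\<in>S. c i * cnj (c j) * (X \<omega> i * cnj (X \<omega> j)))" for \<omega>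
    unfolding complex_norm_square cnj_sum sum_product by (simp add: mult_ac)
  then have "of_real (\<integral>\<omega>. (cmod (\<Sum>i\<in>S. X \<omega> i * c i))^2 \<partial>M) =
      (\<integral>\<omega>. (\<Sum>i\<in>S. \<Sum>j\<in>S. c i * cnj (c j) * (X \<omega> i * cnj (X \<omega> j))) \<partial>M)"
    by (simp flip: integral_complex_of_real)
  also have "\<dots> = (\<Sum>i\<in>S. \<Sum>j\<in>S. \<integral>\<omega>. c i * cnj (c j) * (X \<omega> i * cnj (X \<omega> j)) \<partial>M)"
    by (intro integral_double_sum integrable_mult_right int)
  finally show ?thesis
    by simp
qed

lemma expectation_U_x_sq:
  fixes x :: real
  assumes x: "1 \<le> x"
  defines "S \<equiv> {1..nat \<lfloor>x\<rfloor>} \<times> {1..nat \<lfloor>x\<rfloor>}"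
  shows "of_real (\<integral>\<omega>. (U_x f x \<omega>)^2 \<partial>steinhaus) =
    (\<Sum>q\<in>S. \<Sum>q'\<in>S. if fst q * snd q' = snd q * fst q'
       then Ucoeff f x (fst q) (snd q) * cnj (Ucoeff f x (fst q') (snd q')) else 0) / of_real ((Fm f 1 x)^2)"
proof -
  define X where "X \<omega> q = alpha \<omega> (fst q) * cnj (alpha \<omega> (snd q))" for \<omega> q
  have pos: "fst q > 0" "snd q > 0" if "q \<in> S" for q
    using that unfolding S_def by auto
  have moment: "integrable steinhaus (\<lambda>\<omega>. X \<omega> q * cnj (X \<omega> q'))"
    "(\<integral>\<omega>. X \<omega> q * cnj (X \<omega> q') \<partial>steinhaus) = (if fst q * snd q' = snd q * fst q' then 1 else 0)"
    if "q \<in> S" "q' \<in> S" for q q'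
    using steinhaus_alpha_moment[OF pos[OF that(1)] pos[OF that(2)]] unfolding X_def
    by (simp_all add: mult_ac)
  have "(of_real (\<integral>\<omega>. (U_x f x \<omega>)^2 \<partial>steinhaus) :: complex) =
      of_real (\<integral>\<omega>. (cmod (\<Sum>q\<in>S. X \<omega> q * Ucoeff f x (fst q) (snd q)))^2 \<partial>steinhaus) / of_real ((Fm f 1 x)^2)"
    unfolding U_x_sq[OF x] S_def X_def by (subst integral_divide_zero) (rule of_real_divide)
  also have "of_real (\<integral>\<omega>. (cmod (\<Sum>q\<in>S. X \<omega> q * Ucoeff f x (fst q) (snd q)))^2 \<partial>steinhaus) =
      (\<Sum>q\<in>S. \<Sum>q'\<in>S. if fst q * snd q' = snd q * fst q'
       then Ucoeff f x (fst q) (snd q) * cnj (Ucoeff f x (fst q') (snd q')) else 0)"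
    by (subst integral_norm_sum_sq) (auto simp: S_def moment intro!: sum.cong)
  finally show ?thesis .
qed

lemma sum_pairs_same_class:
  fixes c :: "'a \<Rightarrow> complex" and \<kappa> :: "'a \<Rightarrow> 'b"
  assumes "finite S"
  shows "(\<Sum>i\<in>S. \<Sum>j\<in>S. if \<kappa> i = \<kappa> j then c i * cnj (c j) else 0) =
    of_real (\<Sum>k\<in>\<kappa> ` S. (cmod (\<Sum>i\<in>{i\<in>S. \<kappa> i = k}. c i))^2)"
proof -
  define C where "C k = (\<Sum>i\<in>{i\<in>S. \<kappa> i = k}. c i)" for k
  have "(\<Sum>i\<in>S. \<Sum>j\<in>S. if \<kappa> i = \<kappa> j then c i * cnj (c j) else 0) = (\<Sum>i\<in>S. c i * cnj (C (\<kappa> i)))"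
  proof -
    have "(if \<kappa> i = \<kappa> j then c i * cnj (c j) else 0) = c i * cnj (if \<kappa> j = \<kappa> i then c j else 0)"
      for i j
      by auto
    then show ?thesis
      unfolding C_def by (simp only: cnj_sum sum.inter_filter[OF assms] sum_distrib_left)
  qed
  also have "\<dots> = (\<Sum>k\<in>\<kappa> ` S. \<Sum>i\<in>{i\<in>S. \<kappa> i = k}. c i * cnj (C (\<kappa> i)))"
    by (rule sum.group[symmetric]) (use assms in auto)
  also have "\<dots> = (\<Sum>k\<in>\<kappa> ` S. C k * cnj (C k))"
    unfolding C_def sum_distrib_right by (intro sum.cong refl) simp
  also have "\<dots> = of_real (\<Sum>k\<in>\<kappa> ` S. (cmod (C k))^2)"
    by (simp only: of_real_sum complex_norm_square)
  finally show ?thesis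
    unfolding C_def .
qed

section \<open>Pairs in lowest terms\<close>

definition lowest_terms :: "nat \<times> nat \<Rightarrow> nat \<times> nat" where
  "lowest_terms q = (fst q div gcd (fst q) (snd q), snd q div gcd (fst q) (snd q))"

lemma lowest_terms_mult:
  assumes "coprime a b" "d > 0"
  shows "lowest_terms (d * a, d * b) = (a, b)"
  using assms by (simp add: lowest_terms_def gcd_mult_left)

lemma lowest_terms_decomp:
  assumes "n > 0"
  obtains g a b where "g > 0" "n = g * a" "m = g * b" "coprime a b" "lowest_terms (n, m) = (a, b)"
proof -
  define g where "g = gcd n m"
  have "g > 0"
    using assms unfolding g_def by simp
  moreover obtain a b where "n = g * a" "m = g * b" "coprime a b"
    using gcd_coprime_exists[of n m] assms unfolding g_def by (auto simp: mult.commute)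
  moreover have "lowest_terms (n, m) = (a, b)"
    using lowest_terms_mult[OF \<open>coprime a b\<close> \<open>g > 0\<close>] by (simp add: \<open>n = g * a\<close> \<open>m = g * b\<close>)
  ultimately show ?thesis
    using that by blast
qed

lemma lowest_terms_eq_iff:
  fixes n m n' m' :: nat
  assumes "n > 0" "m > 0" "n' > 0" "m' > 0"
  shows "n * m' = m * n' \<longleftrightarrow> lowest_terms (n, m) = lowest_terms (n', m')"
proof -
  obtain g a b where g: "g > 0" "n = g * a" "m = g * b" "coprime a b" "lowest_terms (n, m) = (a, b)"
    using lowest_terms_decomp[OF assms(1)] .
  obtain g' a' b' where g': "g' > 0" "n' = g' * a'" "m' = g' * b'" "coprime a' b'" "lowest_terms (n', m') = (a', b')"
    using lowest_terms_decomp[OF assms(3)] .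
  have "n * m' = m * n' \<longleftrightarrow> a * b' = b * a'"
    using g(1) g'(1) by (simp add: g(2,3) g'(2,3) mult_ac)
  also have "\<dots> \<longleftrightarrow> a = a' \<and> b = b'"
  proof
    assume eq: "a * b' = b * a'"
    then have "a dvd a' * b" "a' dvd a * b'"
      by (metis dvd_triv_left mult.commute)+
    then have "a dvd a'" "a' dvd a"
      using g(4) g'(4) by (simp_all add: coprime_dvd_mult_left_iff)
    then have "a = a'"
      by (rule dvd_antisym)
    moreover have "a > 0"
      using assms(1) g(2) by simp
    ultimately show "a = a' \<and> b = b'"
      using eq by auto
  qed auto
  finally show ?thesis
    using g(5) g'(5) by simp
qed

lemma lowest_terms_image:
  "lowest_terms ` ({1..N} \<times> {1..N}) = {(a, b). 1 \<le> a \<and> a \<le> N \<and> 1 \<le> b \<and> b \<le> N \<and> coprime a b}"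
proof (intro equalityI subsetI)
  fix k assume "k \<in> lowest_terms ` ({1..N} \<times> {1..N})"
  then obtain n m where nm: "n \<in> {1..N}" "m \<in> {1..N}" "k = lowest_terms (n, m)"
    by auto
  have "n > 0"
    using nm by simp
  then obtain g a b where "g > 0" "n = g * a" "m = g * b" "coprime a b" "k = (a, b)"
    using lowest_terms_decomp nm(3) by metis
  moreover have "a \<le> N" "b \<le> N" "a > 0" "b > 0"
    using nm \<open>g > 0\<close> le_trans[of a "g * a" N] le_trans[of b "g * b" N]
    by (auto simp: \<open>n = g * a\<close> \<open>m = g * b\<close>)
  ultimately show "k \<in> {(a, b). 1 \<le> a \<and> a \<le> N \<and> 1 \<le> b \<and> b \<le> N \<and> coprime a b}"
    using nm by auto
next
  fix k assume "k \<in> {(a, b). 1 \<le> a \<and> a \<le> N \<and> 1 \<le> b \<and> b \<le> N \<and> coprime a b}"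
  then obtain a b where "k = (a, b)" "a \<in> {1..N}" "b \<in> {1..N}" "coprime a b"
    by auto
  then show "k \<in> lowest_terms ` ({1..N} \<times> {1..N})"
    using lowest_terms_mult[of a b 1] by (auto intro!: image_eqI[of _ _ "(a, b)"])
qed

lemma lowest_terms_fibre:
  assumes "coprime a b" "a > 0" "b > 0"
  shows "{q \<in> {1..N} \<times> {1..N}. lowest_terms q = (a, b)} =
    (\<lambda>d. (d * a, d * b)) ` {d. 1 \<le> d \<and> d * max a b \<le> N}"
proof (intro equalityI subsetI)
  fix q assume q: "q \<in> {q \<in> {1..N} \<times> {1..N}. lowest_terms q = (a, b)}"
  then obtain n m where nm: "q = (n, m)" "n \<in> {1..N}" "m \<in> {1..N}"
    by auto
  have "n > 0"
    using nm by simp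
  then obtain g a' b' where "g > 0" "n = g * a'" "m = g * b'" "lowest_terms (n, m) = (a', b')"
    by (rule lowest_terms_decomp)
  moreover have "lowest_terms (n, m) = (a, b)"
    using q nm by simp
  ultimately have "g > 0" "n = g * a" "m = g * b"
    by auto
  moreover have "g * max a b = max n m"
    by (simp add: \<open>n = g * a\<close> \<open>m = g * b\<close> nat_mult_max_right)
  ultimately show "q \<in> (\<lambda>d. (d * a, d * b)) ` {d. 1 \<le> d \<and> d * max a b \<le> N}"
    using nm by (auto simp: mult.commute)
next
  fix q assume "q \<in> (\<lambda>d. (d * a, d * b)) ` {d. 1 \<le> d \<and> d * max a b \<le> N}"
  then obtain d where d: "q = (d * a, d * b)" "1 \<le> d" "d * max a b \<le> N"
    by auto
  moreover have "d * a \<le> N" "d * b \<le> N"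
    using d(3) le_trans[of "d * a" "d * max a b" N] le_trans[of "d * b" "d * max a b" N] by simp_all
  ultimately show "q \<in> {q \<in> {1..N} \<times> {1..N}. lowest_terms q = (a, b)}"
    using assms lowest_terms_mult[OF assms(1), of d] by auto
qed

section \<open>Splitting off the parts of \<open>d\<close> supported on the primes of \<open>ab\<close>\<close>

lemma divides_pow_inf_pos: "divides_pow_inf g n \<Longrightarrow> g > 0"
  by (simp add: divides_pow_inf_def)

lemma divides_pow_inf_mult:
  "divides_pow_inf g n \<Longrightarrow> divides_pow_inf h n \<Longrightarrow> divides_pow_inf (g * h) n"
  by (auto simp: divides_pow_inf_def prime_dvd_mult_iff)

lemma divides_pow_inf_prime: "prime p \<Longrightarrow> p dvd n \<Longrightarrow> divides_pow_inf p n"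
  by (auto simp: divides_pow_inf_def prime_gt_0_nat dest: primes_dvd_imp_eq)

lemma divides_pow_inf_coprime:
  assumes "divides_pow_inf g n" "coprime n m"
  shows "coprime g m"
proof (rule ccontr)
  assume "\<not> coprime g m"
  then obtain p where "prime p" "p dvd gcd g m"
    using prime_factor_nat[of "gcd g m"] by (auto simp: coprime_iff_gcd_eq_1)
  then have "p dvd n" "p dvd m"
    using assms(1) by (auto simp: divides_pow_inf_def)
  then show False
    using assms(2) \<open>prime p\<close> coprime_common_divisor not_prime_unit by blast
qed

lemma coprime_parts:
  assumes "coprime a b" "divides_pow_inf g1 a" "divides_pow_inf g2 b" "coprime h (a * b)"
  shows "coprime (g1 * a) (g2 * b)" "coprime (g1 * a) h" "coprime (g2 * b) h"
proof -
  have "coprime a (g2 * b)"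
    using assms divides_pow_inf_coprime[OF assms(3), of a] by (simp add: coprime_commute)
  moreover have "coprime b h" "coprime a h"
    using assms(4) by (simp_all add: coprime_commute)
  ultimately show "coprime (g1 * a) (g2 * b)" "coprime (g1 * a) h" "coprime (g2 * b) h"
    using divides_pow_inf_coprime[OF assms(2)] divides_pow_inf_coprime[OF assms(3)] by simp_all
qed

lemma coprime_parts_decomposition_exists:
  assumes "d > 0"
  obtains g1 g2 h where "d = g1 * g2 * h" "divides_pow_inf g1 a" "divides_pow_inf g2 b" "coprime h (a * b)"
proof -
  have "d > 0 \<longrightarrow> (\<exists>g1 g2 h. d = g1 * g2 * h \<and> divides_pow_inf g1 a \<and> divides_pow_inf g2 b \<and> coprime h (a * b))"
  proof (induction d rule: prime_divisors_induct)
    case (unit d)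
    then show ?case
      by (auto intro!: exI[of _ 1] simp: divides_pow_inf_def)
  next
    case (factor p d)
    show ?case
    proof
      assume "p * d > 0"
      with factor.IH obtain g1 g2 h where IH: "d = g1 * g2 * h" "divides_pow_inf g1 a"
          "divides_pow_inf g2 b" "coprime h (a * b)"
        by auto
      consider "p dvd a" | "p dvd b" | "coprime p (a * b)"
        using \<open>prime p\<close> by (metis prime_dvd_mult_iff prime_imp_coprime)
      then show "\<exists>g1 g2 h. p * d = g1 * g2 * h \<and> divides_pow_inf g1 a \<and> divides_pow_inf g2 b \<and> coprime h (a * b)"
      proof cases
        case 1
        then show ?thesis
          using IH \<open>prime p\<close> by (intro exI[of _ "p * g1"] exI[of _ g2] exI[of _ h])
            (simp add: divides_pow_inf_mult divides_pow_inf_prime mult_ac)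
      next
        case 2
        then show ?thesis
          using IH \<open>prime p\<close> by (intro exI[of _ g1] exI[of _ "p * g2"] exI[of _ h])
            (simp add: divides_pow_inf_mult divides_pow_inf_prime mult_ac)
      next
        case 3
        then show ?thesis
          using IH by (intro exI[of _ g1] exI[of _ g2] exI[of _ "p * h"]) (simp add: mult_ac)
      qed
    qed
  qed simp
  then show ?thesis
    using assms that by blast
qed

lemma coprime_parts_decomposition_unique:
  assumes "coprime a b"
    and g: "divides_pow_inf g1 a" "divides_pow_inf g2 b" "coprime h (a * b)"
    and g': "divides_pow_inf g1' a" "divides_pow_inf g2' b" "coprime h' (a * b)"
    and eq: "g1 * g2 * h = g1' * g2' * h'"
  shows "g1 = g1' \<and> g2 = g2' \<and> h = h'"
proof -
  note parts = coprime_parts[OF assms(1) g] and parts' = coprime_parts[OF assms(1) g']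
  have "coprime g1 (g2' * h')" "coprime g1' (g2 * h)"
    using parts parts' divides_pow_inf_coprime[OF g(1), of "g2' * h'"]
      divides_pow_inf_coprime[OF g'(1), of "g2 * h"]
    by (simp_all add: coprime_commute)
  moreover have "coprime g2 (g1' * h')" "coprime g2' (g1 * h)"
    using parts parts' divides_pow_inf_coprime[OF g(2), of "g1' * h'"]
      divides_pow_inf_coprime[OF g'(2), of "g1 * h"]
    by (simp_all add: coprime_commute)
  moreover have "g1 * (g2 * h) = g1' * (g2' * h')" "g2 * (g1 * h) = g2' * (g1' * h')"
    using eq by (simp_all add: mult_ac)
  ultimately have "g1 dvd g1'" "g1' dvd g1" "g2 dvd g2'" "g2' dvd g2"
    by (metis coprime_dvd_mult_left_iff dvd_triv_left)+
  then have "g1 = g1'" "g2 = g2'"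
    by (simp_all add: dvd_antisym)
  moreover have "g1 * g2 > 0"
    using g by (simp add: divides_pow_inf_pos)
  ultimately show ?thesis
    using eq by simp
qed

lemma finite_divides_pow_inf_pairs:
  "finite {(g1, g2). divides_pow_inf g1 a \<and> divides_pow_inf g2 b \<and> real (g1 * g2) \<le> y}"
proof -
  have bound: "real g1 \<le> y \<and> real g2 \<le> y"
    if "divides_pow_inf g1 a" "divides_pow_inf g2 b" "real (g1 * g2) \<le> y" for g1 g2
  proof -
    have "g1 \<le> g1 * g2" "g2 \<le> g1 * g2"
      using divides_pow_inf_pos[OF that(1)] divides_pow_inf_pos[OF that(2)] by simp_all
    then show ?thesis
      using that(3) by (meson of_nat_le_iff order_trans)
  qed
  show ?thesis
    by (rule finite_subset[of _ "{..nat \<lfloor>y\<rfloor>} \<times> {..nat \<lfloor>y\<rfloor>}"])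
      (auto dest!: bound simp: le_nat_iff le_floor_iff)
qed

lemma bij_betw_coprime_parts:
  fixes y :: real
  assumes "coprime a b"
  shows "bij_betw (\<lambda>((g1, g2), h). g1 * g2 * h)
    (Sigma {(g1, g2). divides_pow_inf g1 a \<and> divides_pow_inf g2 b \<and> real (g1 * g2) \<le> y}
      (\<lambda>(g1, g2). {h. 1 \<le> h \<and> real h \<le> y / real (g1 * g2) \<and> coprime h (a * b)}))
    {d. 1 \<le> d \<and> real d \<le> y}"
    (is "bij_betw ?\<phi> (Sigma ?E ?H) ?D")
proof (rule bij_betw_imageI)
  show "inj_on ?\<phi> (Sigma ?E ?H)"
  proof (rule inj_onI)
    fix z z' assume "z \<in> Sigma ?E ?H" "z' \<in> Sigma ?E ?H" "?\<phi> z = ?\<phi> z'"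
    moreover obtain g1 g2 h g1' g2' h' where "z = ((g1, g2), h)" "z' = ((g1', g2'), h')"
      by (metis prod.collapse)
    ultimately show "z = z'"
      using coprime_parts_decomposition_unique[OF assms, of g1 g2 h g1' g2' h'] by simp
  qed
  show "?\<phi> ` Sigma ?E ?H = ?D"
  proof (intro equalityI subsetI)
    fix d assume "d \<in> ?\<phi> ` Sigma ?E ?H"
    then obtain g1 g2 h where "(g1, g2) \<in> ?E" "h \<in> ?H (g1, g2)" "d = g1 * g2 * h"
      by auto
    moreover have "g1 * g2 > 0"
      using \<open>(g1, g2) \<in> ?E\<close> by (auto simp: divides_pow_inf_pos)
    ultimately have "h \<ge> 1" "real (g1 * g2) * real h \<le> y"
      by (simp_all add: le_divide_eq mult.commute)
    then show "d \<in> ?D"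
      using \<open>g1 * g2 > 0\<close> \<open>d = g1 * g2 * h\<close> by (simp add: Suc_le_eq)
  next
    fix d assume "d \<in> ?D"
    then have d: "d > 0" "real d \<le> y"
      by auto
    obtain g1 g2 h where dec: "d = g1 * g2 * h" "divides_pow_inf g1 a" "divides_pow_inf g2 b"
        "coprime h (a * b)"
      using d(1) by (rule coprime_parts_decomposition_exists)
    then have "g1 * g2 > 0" "h > 0"
      using d by auto
    moreover have "real d = real (g1 * g2) * real h"
      using dec(1) by simp
    ultimately have "real (g1 * g2) \<le> y" "real h \<le> y / real (g1 * g2)"
      using d(2) by (simp_all add: le_divide_eq mult.commute order_trans[OF _ d(2)])
    then have "((g1, g2), h) \<in> Sigma ?E ?H"
      using dec \<open>h > 0\<close> by simp
    then show "d \<in> ?\<phi> ` Sigma ?E ?H"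
      using dec(1) by force
  qed
qed

lemma sum_coprime_parts_decomposition:
  fixes F :: "nat \<Rightarrow> 'a::comm_monoid_add" and y :: real
  assumes "coprime a b"
  shows "(\<Sum>d\<in>{d. 1 \<le> d \<and> real d \<le> y}. F d) =
    (\<Sum>(g1, g2)\<in>{(g1, g2). divides_pow_inf g1 a \<and> divides_pow_inf g2 b \<and> real (g1 * g2) \<le> y}.
       \<Sum>h\<in>{h. 1 \<le> h \<and> real h \<le> y / real (g1 * g2) \<and> coprime h (a * b)}. F (g1 * g2 * h))"
proof -
  define E where "E = {(g1, g2). divides_pow_inf g1 a \<and> divides_pow_inf g2 b \<and> real (g1 * g2) \<le> y}"
  define H where "H = (\<lambda>(g1, g2). {h. 1 \<le> h \<and> real h \<le> y / real (g1 * g2) \<and> coprime h (a * b)})"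
  define \<phi> :: "(nat \<times> nat) \<times> nat \<Rightarrow> nat" where "\<phi> = (\<lambda>((g1, g2), h). g1 * g2 * h)"
  have "finite E"
    unfolding E_def by (rule finite_divides_pow_inf_pairs)
  moreover have "finite (H q)" for q
    by (rule finite_subset[of _ "{..nat \<lfloor>y / real (fst q * snd q)\<rfloor>}"])
      (auto simp: H_def le_nat_iff le_floor_iff split: prod.splits)
  ultimately have "(\<Sum>z\<in>Sigma E H. F (\<phi> z)) = (\<Sum>q\<in>E. \<Sum>h\<in>H q. F (\<phi> (q, h)))"
    by (simp add: sum.Sigma case_prod_unfold)
  moreover have "(\<Sum>d\<in>{d. 1 \<le> d \<and> real d \<le> y}. F d) = (\<Sum>z\<in>Sigma E H. F (\<phi> z))"
    unfolding E_def H_def \<phi>_def by (rule sum.reindex_bij_betw[OF bij_betw_coprime_parts[OF assms], symmetric])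
  ultimately show ?thesis
    unfolding E_def H_def \<phi>_def by (simp add: case_prod_unfold)
qed

section \<open>The sums over a class of pairs\<close>

lemma multiplicative_mult: "multiplicative f \<Longrightarrow> coprime n m \<Longrightarrow> f (n * m) = f n * f m"
  unfolding multiplicative_def by blast

lemma Fm_eq_0_if_less_1: "y < 1 \<Longrightarrow> Fm f m y = 0"
  unfolding Fm_def by (rule sum.neutral) auto

lemma Ucoeff_coprime_parts:
  fixes x :: real
  assumes f: "multiplicative f" and "coprime a b" "a > 0" "b > 0"
    and g: "divides_pow_inf g1 a" "divides_pow_inf g2 b" "coprime h (a * b)" "h > 0"
  defines "K \<equiv> real (max a b * g1 * g2)"
  shows "Ucoeff f x (g1 * g2 * h * a) (g1 * g2 * h * b) =
    cnj (f g1) * f (g1 * a) * f g2 * cnj (f (g2 * b)) *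
      of_real ((cmod (f h))^2 * (1 / real h - 1 / (x / K)) / K)"
proof -
  note parts = coprime_parts[OF \<open>coprime a b\<close> g(1-3)]
  define coef where "coef = cnj (f g1) * f (g1 * a) * f g2 * cnj (f (g2 * b))"
  have fa: "f (g1 * g2 * h * a) = f (g1 * a) * f g2 * f h"
    using multiplicative_mult[OF f, of "g1 * a" "g2 * h"] multiplicative_mult[OF f, of g2 h] parts
    by (simp add: mult_ac)
  have fb: "f (g1 * g2 * h * b) = f g1 * f (g2 * b) * f h"
    using multiplicative_mult[OF f, of g1 "g2 * b * h"] multiplicative_mult[OF f, of "g2 * b" h] parts
    by (simp add: mult_ac)
  have "max (g1 * g2 * h * a) (g1 * g2 * h * b) = g1 * g2 * h * max a b"
    by (rule nat_mult_max_right[symmetric])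
  then have max: "real (max (g1 * g2 * h * a) (g1 * g2 * h * b)) = K * real h"
    unfolding K_def by (simp only: of_nat_mult mult_ac)
  have "K > 0"
    unfolding K_def using assms divides_pow_inf_pos[OF g(1)] divides_pow_inf_pos[OF g(2)] by simp
  have "Ucoeff f x (g1 * g2 * h * a) (g1 * g2 * h * b) =
      coef * (f h * cnj (f h)) * of_real (1 / (K * real h) - 1 / x)"
    unfolding Ucoeff_def fa fb max coef_def by (simp add: mult_ac)
  also have "1 / (K * real h) - 1 / x = (1 / real h - 1 / (x / K)) / K"
    using \<open>K > 0\<close> \<open>h > 0\<close> by (simp add: field_simps)
  also have "f h * cnj (f h) = of_real ((cmod (f h))^2)"
    by (rule complex_norm_square[symmetric])
  finally show ?thesis
    unfolding coef_def by (simp add: mult_ac)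
qed

(* No positivity of d is needed: for d = 0 the argument x / 0 of Fm is 0. *)
lemma S1_eq_0_if_less: "x < real d \<Longrightarrow> S1 f x m d = 0"
proof -
  assume "x < real d"
  then have "x / real d < 1"
    by (cases "d = 0") (simp_all add: divide_less_eq)
  then show ?thesis
    by (simp add: S1_def Fm_eq_0_if_less_1)
qed

lemma sum_Ucoeff_coprime_multiples:
  fixes x :: real
  assumes f: "multiplicative f" and ab: "coprime a b" "a > 0" "b > 0"
    and g: "divides_pow_inf g1 a" "divides_pow_inf g2 b"
  defines "K \<equiv> real (max a b * g1 * g2)"
  shows "(\<Sum>h\<in>{h. 1 \<le> h \<and> real h \<le> x / K \<and> coprime h (a * b)}.
      Ucoeff f x (g1 * g2 * h * a) (g1 * g2 * h * b)) =
    cnj (f g1) * f (g1 * a) * f g2 * cnj (f (g2 * b)) * of_real (Fm f (a * b) (x / K) / K)"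
proof -
  have "(\<Sum>h\<in>{h. 1 \<le> h \<and> real h \<le> x / K \<and> coprime h (a * b)}.
      Ucoeff f x (g1 * g2 * h * a) (g1 * g2 * h * b)) =
    (\<Sum>h\<in>{h. 1 \<le> h \<and> real h \<le> x / K \<and> coprime h (a * b)}.
      cnj (f g1) * f (g1 * a) * f g2 * cnj (f (g2 * b)) *
      of_real ((cmod (f h))^2 * (1 / real h - 1 / (x / K)) / K))"
    unfolding K_def by (intro sum.cong refl) (rule Ucoeff_coprime_parts[OF f ab g]; auto)
  also have "\<dots> = cnj (f g1) * f (g1 * a) * f g2 * cnj (f (g2 * b)) * of_real (Fm f (a * b) (x / K) / K)"
    unfolding Fm_def by (simp add: sum_distrib_left sum_divide_distrib)
  finally show ?thesis .
qed

lemma infsum_S1_truncate: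
  fixes c :: "nat \<Rightarrow> nat \<Rightarrow> complex"
  assumes "M > 0"
  shows "(\<Sum>\<^sub>\<infinity>(g1, g2)\<in>{(g1, g2). divides_pow_inf g1 a \<and> divides_pow_inf g2 b}.
      c g1 g2 * of_real (S1 f x m (M * g1 * g2))) =
    (\<Sum>(g1, g2)\<in>{(g1, g2). divides_pow_inf g1 a \<and> divides_pow_inf g2 b \<and> real (g1 * g2) \<le> x / real M}.
      c g1 g2 * of_real (S1 f x m (M * g1 * g2)))"
proof -
  have "(\<Sum>\<^sub>\<infinity>(g1, g2)\<in>{(g1, g2). divides_pow_inf g1 a \<and> divides_pow_inf g2 b}.
      c g1 g2 * of_real (S1 f x m (M * g1 * g2))) =
    (\<Sum>\<^sub>\<infinity>(g1, g2)\<in>{(g1, g2). divides_pow_inf g1 a \<and> divides_pow_inf g2 b \<and> real (g1 * g2) \<le> x / real M}.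
      c g1 g2 * of_real (S1 f x m (M * g1 * g2)))"
  proof (rule infsum_cong_neutral)
    fix q assume "q \<in> {(g1, g2). divides_pow_inf g1 a \<and> divides_pow_inf g2 b} -
      {(g1, g2). divides_pow_inf g1 a \<and> divides_pow_inf g2 b \<and> real (g1 * g2) \<le> x / real M}"
    then have "x < real (M * fst q * snd q)"
      using assms by (auto simp: field_simps)
    then show "(case q of (g1, g2) \<Rightarrow> c g1 g2 * of_real (S1 f x m (M * g1 * g2))) = 0"
      by (simp add: S1_eq_0_if_less case_prod_unfold)
  qed auto
  then show ?thesis
    using finite_divides_pow_inf_pairs by simp
qed

lemma sum_Ucoeff_multiples:
  fixes f :: "nat \<Rightarrow> complex" and x :: real
  assumes f: "multiplicative f" and F: "Fm f 1 x \<noteq> 0" and ab: "coprime a b" "a > 0" "b > 0"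
  shows "(\<Sum>d\<in>{d. 1 \<le> d \<and> real d \<le> x / real (max a b)}. Ucoeff f x (d * a) (d * b)) =
    of_real (Fm f 1 x / real (max a b)) *
    (\<Sum>\<^sub>\<infinity>(g1, g2)\<in>{(g1, g2). divides_pow_inf g1 a \<and> divides_pow_inf g2 b}.
       cnj (f g1) * f (g1 * a) * f g2 * cnj (f (g2 * b)) / of_nat (g1 * g2)
       * of_real (S1 f x (a * b) (max a b * g1 * g2)))"
proof -
  define M where "M = max a b"
  define trm where "trm g1 g2 = cnj (f g1) * f (g1 * a) * f g2 * cnj (f (g2 * b)) / of_nat (g1 * g2)
    * of_real (S1 f x (a * b) (M * g1 * g2))" for g1 g2
  have M: "M > 0"
    using ab by (simp add: M_def)
  have inner: "(\<Sum>h\<in>{h. 1 \<le> h \<and> real h \<le> x / real M / real (g1 * g2) \<and> coprime h (a * b)}.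
        Ucoeff f x (g1 * g2 * h * a) (g1 * g2 * h * b)) =
      of_real (Fm f 1 x / real M) * trm g1 g2"
    if g: "divides_pow_inf g1 a" "divides_pow_inf g2 b" for g1 g2
  proof -
    have "x / real M / real (g1 * g2) = x / real (M * g1 * g2)"
      by (simp add: mult.assoc)
    moreover have "real g1 > 0" "real g2 > 0"
      using g by (simp_all add: divides_pow_inf_pos)
    ultimately show ?thesis
      using sum_Ucoeff_coprime_multiples[OF f ab g, of x] F M
      by (simp add: M_def trm_def S1_def field_simps)
  qed
  have "(\<Sum>d\<in>{d. 1 \<le> d \<and> real d \<le> x / real M}. Ucoeff f x (d * a) (d * b)) =
      (\<Sum>(g1, g2)\<in>{(g1, g2). divides_pow_inf g1 a \<and> divides_pow_inf g2 b \<and> real (g1 * g2) \<le> x / real M}.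
        of_real (Fm f 1 x / real M) * trm g1 g2)"
    unfolding sum_coprime_parts_decomposition[OF ab(1)]
    by (rule sum.cong[OF refl]) (auto simp only: mem_Collect_eq split_paired_all prod.case intro: inner)
  also have "\<dots> = of_real (Fm f 1 x / real M) *
      (\<Sum>\<^sub>\<infinity>(g1, g2)\<in>{(g1, g2). divides_pow_inf g1 a \<and> divides_pow_inf g2 b}. trm g1 g2)"
    unfolding trm_def infsum_S1_truncate[OF M] by (simp add: sum_distrib_left case_prod_unfold)
  finally show ?thesis
    unfolding M_def trm_def .
qed

lemma expectation_U_x_sq_lowest_terms:
  fixes x :: real
  assumes x: "1 \<le> x"
  defines "P \<equiv> {1..nat \<lfloor>x\<rfloor>}"
  shows "(\<integral>\<omega>. (U_x f x \<omega>)^2 \<partial>steinhaus) =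
    (\<Sum>k\<in>{(n1, n2). 1 \<le> n1 \<and> real n1 \<le> x \<and> 1 \<le> n2 \<and> real n2 \<le> x \<and> coprime n1 n2}.
      (cmod (\<Sum>q\<in>{q \<in> P \<times> P. lowest_terms q = k}. Ucoeff f x (fst q) (snd q)))^2) / (Fm f 1 x)^2"
proof -
  define T where "T = {(n1, n2). 1 \<le> n1 \<and> real n1 \<le> x \<and> 1 \<le> n2 \<and> real n2 \<le> x \<and> coprime n1 n2}"
  have T: "lowest_terms ` (P \<times> P) = T"
    unfolding P_def T_def lowest_terms_image using x by (auto simp: le_nat_floor_iff)
  have same_class: "fst q * snd q' = snd q * fst q' \<longleftrightarrow> lowest_terms q = lowest_terms q'"
    if "q \<in> P \<times> P" "q' \<in> P \<times> P" for q q'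
    using that lowest_terms_eq_iff[of "fst q" "snd q" "fst q'" "snd q'"] by (auto simp: P_def)
  have "(of_real (\<integral>\<omega>. (U_x f x \<omega>)^2 \<partial>steinhaus) :: complex) =
    (\<Sum>q\<in>P \<times> P. \<Sum>q'\<in>P \<times> P. if fst q * snd q' = snd q * fst q'
       then Ucoeff f x (fst q) (snd q) * cnj (Ucoeff f x (fst q') (snd q')) else 0) / of_real ((Fm f 1 x)^2)"
    unfolding P_def by (rule expectation_U_x_sq[OF x])
  also have "(\<Sum>q\<in>P \<times> P. \<Sum>q'\<in>P \<times> P. if fst q * snd q' = snd q * fst q'
       then Ucoeff f x (fst q) (snd q) * cnj (Ucoeff f x (fst q') (snd q')) else 0) =
    (\<Sum>q\<in>P \<times> P. \<Sum>q'\<in>P \<times> P. if lowest_terms q = lowest_terms q'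
       then Ucoeff f x (fst q) (snd q) * cnj (Ucoeff f x (fst q') (snd q')) else 0)"
    by (intro sum.cong refl) (simp add: same_class)
  also have "\<dots> = of_real (\<Sum>k\<in>T. (cmod (\<Sum>q\<in>{q \<in> P \<times> P. lowest_terms q = k}. Ucoeff f x (fst q) (snd q)))^2)"
    unfolding T[symmetric] by (rule sum_pairs_same_class) (simp add: P_def)
  finally show ?thesis
    unfolding T_def by (simp only: of_real_divide[symmetric] of_real_eq_iff)
qed

lemma sum_Ucoeff_lowest_terms_fibre:
  fixes f :: "nat \<Rightarrow> complex" and x :: real
  assumes f: "multiplicative f" and x: "1 \<le> x" and F: "Fm f 1 x \<noteq> 0"
    and ab: "coprime a b" "a > 0" "b > 0"
  shows "(\<Sum>q\<in>{q \<in> {1..nat \<lfloor>x\<rfloor>} \<times> {1..nat \<lfloor>x\<rfloor>}. lowest_terms q = (a, b)}. Ucoeff f x (fst q) (snd q)) =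
    of_real (Fm f 1 x / real (max a b)) *
    (\<Sum>\<^sub>\<infinity>(g1, g2)\<in>{(g1, g2). divides_pow_inf g1 a \<and> divides_pow_inf g2 b}.
       cnj (f g1) * f (g1 * a) * f g2 * cnj (f (g2 * b)) / of_nat (g1 * g2)
       * of_real (S1 f x (a * b) (max a b * g1 * g2)))"
proof -
  have D: "{d. 1 \<le> d \<and> d * max a b \<le> nat \<lfloor>x\<rfloor>} = {d. 1 \<le> d \<and> real d \<le> x / real (max a b)}"
    using x ab by (auto simp: le_nat_floor_iff le_divide_eq)
  have inj: "inj (\<lambda>d. (d * a, d * b))"
    using ab by (auto intro: injI)
  show ?thesis
    unfolding lowest_terms_fibre[OF ab] D sum.reindex[OF inj_on_subset[OF inj subset_UNIV]]
      comp_def fst_conv snd_conv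
    by (rule sum_Ucoeff_multiples[OF f F ab])
qed

theorem lemma3p2:
  fixes f :: "nat \<Rightarrow> complex" and x :: real
  assumes "multiplicative f" and "x \<ge> 1" and "Fm f 1 x > 0"
  shows "integral\<^sup>L steinhaus (\<lambda>\<omega>. (U_x f x \<omega>)^2) =
    (\<Sum>(n1, n2)\<in>{(n1, n2). 1 \<le> n1 \<and> real n1 \<le> x \<and> 1 \<le> n2 \<and> real n2 \<le> x \<and> coprime n1 n2}.
       1 / (real (max n1 n2))^2 *
       (cmod (\<Sum>\<^sub>\<infinity>(g1, g2)\<in>{(g1, g2). divides_pow_inf g1 n1 \<and> divides_pow_inf g2 n2}.
          cnj (f g1) * f (g1 * n1) * f g2 * cnj (f (g2 * n2)) / of_nat (g1 * g2)
          * of_real (S1 f x (n1 * n2) (max n1 n2 * g1 * g2))))^2)"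
proof -
  have F: "Fm f 1 x \<noteq> 0"
    using assms(3) by simp
  show ?thesis
    unfolding expectation_U_x_sq_lowest_terms[OF assms(2)] sum_divide_distrib
  proof (rule sum.cong[OF refl], clarify)
    fix a b assume "1 \<le> a" "real a \<le> x" "1 \<le> b" "real b \<le> x" "coprime a b"
    then have ab: "coprime a b" "a > 0" "b > 0"
      by auto
    show "(cmod (\<Sum>q\<in>{q \<in> {1..nat \<lfloor>x\<rfloor>} \<times> {1..nat \<lfloor>x\<rfloor>}. lowest_terms q = (a, b)}.
          Ucoeff f x (fst q) (snd q)))^2 / (Fm f 1 x)^2 = 1 / (real (max a b))^2 *
       (cmod (\<Sum>\<^sub>\<infinity>(g1, g2)\<in>{(g1, g2). divides_pow_inf g1 a \<and> divides_pow_inf g2 b}.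
          cnj (f g1) * f (g1 * a) * f g2 * cnj (f (g2 * b)) / of_nat (g1 * g2)
          * of_real (S1 f x (a * b) (max a b * g1 * g2))))^2"
      unfolding sum_Ucoeff_lowest_terms_fibre[OF assms(1,2) F ab] norm_mult norm_of_real
      using F ab by (simp add: power_mult_distrib power_divide field_simps)
  qed
qed

end
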